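(* Let $\{(\Gamma_t,\theta_t)\}_{t\in[0,\underline t)}$ solve the framed curvature flow, with $\kappa>0$ so that the torsion is defined. Then $$\frac{d}{dt}\int_{\Gamma_t}\tau\,ds=\frac{d}{dt}\int_{\Gamma_t}\psi_3\,ds=\int_{\Gamma_t}\big(\psi_1\psi_3\kappa+\psi_2\,\partial_s\kappa\big)\,ds .$$
   Context: $S^1=\mathbb{R}/2\pi\mathbb{Z}$; closed curves $\Gamma_t$ parametrized by $\gamma(t,\cdot):S^1\to\mathbb{R}^3$, $g=\|\partial_u\gamma\|$, $ds=g\,du$, $\partial_s=g^{-1}\partial_u$; Frenet frame $T,N,B$, curvature $\kappa$, torsion $\tau$. For an angle function $\theta\in\mathcal C^{1,2}([0,\underline t)\times S^1;S^1)$: $\nu_\theta=\cos\theta N+\sin\theta B$, $\psi_1=\kappa\cos\theta$, $\psi_2=\kappa\sin\theta$, $\psi_3=\tau+\partial_s\theta$. Framed curvature flow: $\partial_t\gamma=\kappa\nu_\theta$, $\partial_t\theta=\upsilon_\theta$ with $\upsilon_\theta\in\mathcal C^1$. *)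

theory Defs
  imports "HOL-Analysis.Analysis"
begin

definition speed :: "(real \<Rightarrow> real^3) \<Rightarrow> real \<Rightarrow> real" where
  "speed c u = norm (vector_derivative c (at u))"

definition sdv :: "(real \<Rightarrow> real^3) \<Rightarrow> (real \<Rightarrow> real^3) \<Rightarrow> real \<Rightarrow> real^3" where
  "sdv c f u = (1 / speed c u) *\<^sub>R vector_derivative f (at u)"

definition sdr :: "(real \<Rightarrow> real^3) \<Rightarrow> (real \<Rightarrow> real) \<Rightarrow> real \<Rightarrow> real" where
  "sdr c f u = deriv f u / speed c u"

definition tangent :: "(real \<Rightarrow> real^3) \<Rightarrow> real \<Rightarrow> real^3" where
  "tangent c = sdv c c"

definition curv :: "(real \<Rightarrow> real^3) \<Rightarrow> real \<Rightarrow> real" where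
  "curv c u = norm (sdv c (tangent c) u)"

definition normal :: "(real \<Rightarrow> real^3) \<Rightarrow> real \<Rightarrow> real^3" where
  "normal c u = (1 / curv c u) *\<^sub>R sdv c (tangent c) u"

definition binormal :: "(real \<Rightarrow> real^3) \<Rightarrow> real \<Rightarrow> real^3" where
  "binormal c u = cross3 (tangent c u) (normal c u)"

text \<open>torsion from the Frenet equation  d_s N = - kappa T + tau B\<close>
definition tors :: "(real \<Rightarrow> real^3) \<Rightarrow> real \<Rightarrow> real" where
  "tors c u = sdv c (normal c) u \<bullet> binormal c u"

text \<open>framed quantities for an angle function th (lifted to real values)\<close>
definition nu_fr :: "(real \<Rightarrow> real^3) \<Rightarrow> (real \<Rightarrow> real) \<Rightarrow> real \<Rightarrow> real^3" where
  "nu_fr c th u = cos (th u) *\<^sub>R normal c u + sin (th u) *\<^sub>R binormal c u"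

definition psi1 :: "(real \<Rightarrow> real^3) \<Rightarrow> (real \<Rightarrow> real) \<Rightarrow> real \<Rightarrow> real" where
  "psi1 c th u = curv c u * cos (th u)"

definition psi2 :: "(real \<Rightarrow> real^3) \<Rightarrow> (real \<Rightarrow> real) \<Rightarrow> real \<Rightarrow> real" where
  "psi2 c th u = curv c u * sin (th u)"

definition psi3 :: "(real \<Rightarrow> real^3) \<Rightarrow> (real \<Rightarrow> real) \<Rightarrow> real \<Rightarrow> real" where
  "psi3 c th u = tors c u + sdr c th u"

definition curve_int :: "(real \<Rightarrow> real^3) \<Rightarrow> (real \<Rightarrow> real) \<Rightarrow> real" where
  "curve_int c f = integral {0..2*pi} (\<lambda>u. f u * speed c u)"

definition pdt :: "real set \<Rightarrow> (real \<Rightarrow> real \<Rightarrow> 'a::real_normed_vector) \<Rightarrow> real \<Rightarrow> real \<Rightarrow> 'a" where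
  "pdt S F t u = vector_derivative (\<lambda>s. F s u) (at t within S)"

definition pdu :: "(real \<Rightarrow> real \<Rightarrow> 'a::real_normed_vector) \<Rightarrow> real \<Rightarrow> real \<Rightarrow> 'a" where
  "pdu F t u = vector_derivative (\<lambda>v. F t v) (at u)"

text \<open>F is continuous on S x R and its partial derivative of order (i,j) exists
  (one-sided at boundary points of S in time) and is continuous, for all i \<le> m, j \<le> n
  (first i time derivatives, then j space derivatives).\<close>
definition Cmn :: "nat \<Rightarrow> nat \<Rightarrow> real set \<Rightarrow> (real \<Rightarrow> real \<Rightarrow> 'a::real_normed_vector) \<Rightarrow> bool" where
  "Cmn m n S F \<longleftrightarrow>
     (\<forall>i\<le>m. \<forall>j\<le>n.
        continuous_on (Sigma S (\<lambda>_. UNIV)) (\<lambda>(t,u). (pdu ^^ j) ((pdt S ^^ i) F) t u) \<and>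
        (\<forall>t\<in>S. \<forall>u. (i < m \<and> j = 0 \<longrightarrow>
            ((\<lambda>s. ((pdt S ^^ i) F) s u) has_vector_derivative (pdt S ^^ Suc i) F t u) (at t within S)) \<and>
          (j < n \<longrightarrow>
            ((\<lambda>v. (pdu ^^ j) ((pdt S ^^ i) F) t v) has_vector_derivative
               (pdu ^^ Suc j) ((pdt S ^^ i) F) t u) (at u))))"

definition smooth_flow :: "real set \<Rightarrow> (real \<Rightarrow> real \<Rightarrow> 'a::real_normed_vector) \<Rightarrow> bool" where
  "smooth_flow S F \<longleftrightarrow> (\<forall>m n. Cmn m n S F)"

end

theory Submission
  imports Defs
begin

(* The total torsion is  int tau ds = int_0^2pi <N_u, B> du.  Differentiating under the
   integral sign and integrating <N_ut, B> by parts (the boundary term cancels by periodicity)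
   leaves  int (<N_u, B_t> - <N_t, B_u>) du.  Expanded in the orthonormal frame (T, N, B), the
   second product vanishes and the first equals  kappa <gamma_tu, B>;  the flow
   gamma_t = kappa (cos theta N + sin theta B)  together with the Frenet equations turns this
   into  (psi1 psi3 kappa + psi2 d_s kappa) g.  Finally  int psi3 ds  exceeds  int tau ds  by
   theta(2pi) - theta(0), which lies in 2 pi Z and is continuous in t, hence constant. *)

section \<open>Continuous partial derivatives on \<open>[0, b) \<times> \<real>\<close>\<close>

datatype coord = Time | Space

definition has_partial ::
    "coord \<Rightarrow> real \<Rightarrow> (real \<Rightarrow> real \<Rightarrow> 'a::real_normed_vector) \<Rightarrow> (real \<Rightarrow> real \<Rightarrow> 'a) \<Rightarrow> bool" where
  "has_partial d b F D \<longleftrightarrow>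
     continuous_on ({0..<b} \<times> UNIV) (\<lambda>p. F (fst p) (snd p)) \<and>
     continuous_on ({0..<b} \<times> UNIV) (\<lambda>p. D (fst p) (snd p)) \<and>
     (\<forall>t\<in>{0..<b}. \<forall>u. case d of
        Time \<Rightarrow> ((\<lambda>s. F s u) has_vector_derivative D t u) (at t within {0..<b})
      | Space \<Rightarrow> ((\<lambda>v. F t v) has_vector_derivative D t u) (at u))"

lemma has_partialI:
  assumes "continuous_on ({0..<b} \<times> UNIV) (\<lambda>p. F (fst p) (snd p))"
    and "continuous_on ({0..<b} \<times> UNIV) (\<lambda>p. D (fst p) (snd p))"
    and "\<And>t u. d = Time \<Longrightarrow> t \<in> {0..<b} \<Longrightarrow>
           ((\<lambda>s. F s u) has_vector_derivative D t u) (at t within {0..<b})"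
    and "\<And>t u. d = Space \<Longrightarrow> t \<in> {0..<b} \<Longrightarrow> ((\<lambda>v. F t v) has_vector_derivative D t u) (at u)"
  shows "has_partial d b F D"
  using assms unfolding has_partial_def by (auto split: coord.split)

lemma
  assumes "has_partial d b F D"
  shows has_partial_continuous: "continuous_on ({0..<b} \<times> UNIV) (\<lambda>p. F (fst p) (snd p))"
    and has_partial_continuous_deriv: "continuous_on ({0..<b} \<times> UNIV) (\<lambda>p. D (fst p) (snd p))"
    and has_partial_TimeD: "d = Time \<Longrightarrow> t \<in> {0..<b} \<Longrightarrow>
           ((\<lambda>s. F s u) has_vector_derivative D t u) (at t within {0..<b})"
    and has_partial_SpaceD: "d = Space \<Longrightarrow> t \<in> {0..<b} \<Longrightarrow>
           ((\<lambda>v. F t v) has_vector_derivative D t u) (at u)"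
  using assms unfolding has_partial_def by auto

lemmas has_partialD = has_partial_continuous has_partial_continuous_deriv
  has_partial_TimeD has_partial_SpaceD

lemma has_partial_cong:
  assumes "has_partial d b F D"
    and "\<And>t u. t \<in> {0..<b} \<Longrightarrow> F t u = G t u" "\<And>t u. t \<in> {0..<b} \<Longrightarrow> D t u = E t u"
  shows "has_partial d b G E"
proof (rule has_partialI)
  show "continuous_on ({0..<b} \<times> UNIV) (\<lambda>p. G (fst p) (snd p))"
    using has_partial_continuous[OF assms(1)] by (rule continuous_on_eq) (auto simp: assms(2))
  show "continuous_on ({0..<b} \<times> UNIV) (\<lambda>p. E (fst p) (snd p))"
    using has_partial_continuous_deriv[OF assms(1)] by (rule continuous_on_eq) (auto simp: assms(3))
  fix t u assume t: "t \<in> {0..<b}"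
  show "((\<lambda>s. G s u) has_vector_derivative E t u) (at t within {0..<b})" if "d = Time"
  proof -
    have "((\<lambda>s. F s u) has_vector_derivative E t u) (at t within {0..<b})"
      using has_partial_TimeD[OF assms(1) that t, of u] assms(3)[OF t] by simp
    then show ?thesis
      by (rule has_vector_derivative_transform[OF t, rotated]) (simp add: assms(2))
  qed
  show "((\<lambda>v. G t v) has_vector_derivative E t u) (at u)" if "d = Space"
  proof -
    have "G t = F t" using assms(2)[OF t] by auto
    then show ?thesis
      using has_partial_SpaceD[OF assms(1) that t, of u] by (simp add: assms(3)[OF t])
  qed
qed

lemma has_partial_const: "has_partial d b (\<lambda>t u. c) (\<lambda>t u. 0)"
  by (rule has_partialI) auto

lemma has_partial_add:
  assumes F: "has_partial d b F F'" and G: "has_partial d b G G'"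
  shows "has_partial d b (\<lambda>t u. F t u + G t u) (\<lambda>t u. F' t u + G' t u)"
  using has_partialD[OF F] has_partialD[OF G]
  by (intro has_partialI continuous_intros has_vector_derivative_add) auto

lemma has_partial_bilinear:
  assumes bil: "bounded_bilinear bil" and F: "has_partial d b F F'" and G: "has_partial d b G G'"
  shows "has_partial d b (\<lambda>t u. bil (F t u) (G t u))
           (\<lambda>t u. bil (F t u) (G' t u) + bil (F' t u) (G t u))"
  using has_partialD[OF F] has_partialD[OF G]
  by (intro has_partialI bounded_bilinear.continuous_on[OF bil] continuous_intros
      bounded_bilinear.has_vector_derivative[OF bil]) auto

lemma has_partial_compose:
  fixes F :: "real \<Rightarrow> real \<Rightarrow> real"
  assumes F: "has_partial d b F F'" and "open A" and FA: "\<And>t u. t \<in> {0..<b} \<Longrightarrow> F t u \<in> A"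
    and \<phi>: "\<And>x. x \<in> A \<Longrightarrow> (\<phi> has_real_derivative \<phi>' x) (at x)" and "continuous_on A \<phi>'"
  shows "has_partial d b (\<lambda>t u. \<phi> (F t u)) (\<lambda>t u. \<phi>' (F t u) * F' t u)"
proof (rule has_partialI)
  have img: "(\<lambda>p. F (fst p) (snd p)) ` ({0..<b} \<times> UNIV) \<subseteq> A" using FA by auto
  have "continuous_on A \<phi>"
    using \<phi> by (intro continuous_at_imp_continuous_on) (auto intro: DERIV_isCont)
  then show "continuous_on ({0..<b} \<times> UNIV) (\<lambda>p. \<phi> (F (fst p) (snd p)))"
    using continuous_on_compose2[OF _ has_partial_continuous[OF F] img] by blast
  have "continuous_on ({0..<b} \<times> UNIV) (\<lambda>p. \<phi>' (F (fst p) (snd p)))"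
    using continuous_on_compose2[OF assms(5) has_partial_continuous[OF F] img] by blast
  then show "continuous_on ({0..<b} \<times> UNIV) (\<lambda>p. \<phi>' (F (fst p) (snd p)) * F' (fst p) (snd p))"
    using has_partial_continuous_deriv[OF F] by (intro continuous_intros)
next
  fix t u assume t: "t \<in> {0..<b}"
  show "((\<lambda>s. \<phi> (F s u)) has_vector_derivative \<phi>' (F t u) * F' t u) (at t within {0..<b})"
    if "d = Time"
    using DERIV_chain2[OF \<phi>[OF FA[OF t]] has_partial_TimeD[OF F that t, unfolded
        has_real_derivative_iff_has_vector_derivative[symmetric]]]
    by (simp add: has_real_derivative_iff_has_vector_derivative)
  show "((\<lambda>v. \<phi> (F t v)) has_vector_derivative \<phi>' (F t u) * F' t u) (at u)" if "d = Space"
    using DERIV_chain2[OF \<phi>[OF FA[OF t]] has_partial_SpaceD[OF F that t, unfolded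
        has_real_derivative_iff_has_vector_derivative[symmetric]]]
    by (simp add: has_real_derivative_iff_has_vector_derivative)
qed

lemma has_partial_inverse:
  fixes F :: "real \<Rightarrow> real \<Rightarrow> real"
  assumes "has_partial d b F F'" and "\<And>t u. t \<in> {0..<b} \<Longrightarrow> F t u \<noteq> 0"
  shows "has_partial d b (\<lambda>t u. 1 / F t u) (\<lambda>t u. - (1 / F t u)\<^sup>2 * F' t u)"
  using assms
  by (intro has_partial_compose[where A = "- {0}"])
    (auto intro!: derivative_eq_intros continuous_intros simp: power2_eq_square field_simps)

lemma has_partial_norm:
  fixes F :: "real \<Rightarrow> real \<Rightarrow> 'a::real_inner"
  assumes F: "has_partial d b F F'" and nz: "\<And>t u. t \<in> {0..<b} \<Longrightarrow> F t u \<noteq> 0"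
  shows "has_partial d b (\<lambda>t u. norm (F t u)) (\<lambda>t u. (F t u \<bullet> F' t u) / norm (F t u))"
proof -
  have "has_partial d b (\<lambda>t u. F t u \<bullet> F t u) (\<lambda>t u. F t u \<bullet> F' t u + F' t u \<bullet> F t u)"
    by (rule has_partial_bilinear[OF bounded_bilinear_inner F F])
  then have "has_partial d b (\<lambda>t u. sqrt (F t u \<bullet> F t u))
      (\<lambda>t u. inverse (sqrt (F t u \<bullet> F t u)) / 2 * (F t u \<bullet> F' t u + F' t u \<bullet> F t u))"
    using nz by (intro has_partial_compose[where A = "{0<..}"])
      (auto intro!: DERIV_real_sqrt continuous_intros)
  then show ?thesis
    by (rule has_partial_cong)
      (simp_all add: norm_eq_sqrt_inner[symmetric] inner_commute field_simps)
qed

lemma at_within_atLeastLessThan_nontrivial: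
  "t \<in> {0..<b} \<Longrightarrow> at t within {0..<b} \<noteq> (bot :: real filter)"
proof -
  assume t: "t \<in> {0..<b}"
  have "t islimpt {t<..<b}" using t by (intro islimpt_greaterThanLessThan1) auto
  then have "t islimpt {0..<b}" by (rule islimpt_subset) (use t in auto)
  then show ?thesis by (simp add: trivial_limit_within)
qed

lemma has_partial_Time_pdt:
  assumes "has_partial Time b F D"
  shows "has_partial Time b F (pdt {0..<b} F)" and "t \<in> {0..<b} \<Longrightarrow> pdt {0..<b} F t u = D t u"
proof -
  show eq: "pdt {0..<b} F t u = D t u" if "t \<in> {0..<b}" for t u
    unfolding pdt_def
    by (rule vector_derivative_within[OF at_within_atLeastLessThan_nontrivial[OF that]
          has_partial_TimeD[OF assms refl that]])
  show "has_partial Time b F (pdt {0..<b} F)"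
    by (rule has_partial_cong[OF assms]) (simp_all add: eq)
qed

lemma has_partial_Space_pdu:
  assumes "has_partial Space b F D"
  shows "has_partial Space b F (pdu F)" and "t \<in> {0..<b} \<Longrightarrow> pdu F t u = D t u"
proof -
  show eq: "pdu F t u = D t u" if "t \<in> {0..<b}" for t u
    unfolding pdu_def by (rule vector_derivative_at[OF has_partial_SpaceD[OF assms refl that]])
  show "has_partial Space b F (pdu F)"
    by (rule has_partial_cong[OF assms]) (simp_all add: eq)
qed

lemma continuous_on_slice_fst:
  assumes "continuous_on (S \<times> T) (\<lambda>p. F (fst p) (snd p))" "A \<subseteq> S" "v \<in> T"
  shows "continuous_on A (\<lambda>s. F s v)"
proof -
  have "continuous_on A (\<lambda>s. (s, v))" by (intro continuous_intros)
  moreover have "(\<lambda>s. (s, v)) ` A \<subseteq> S \<times> T" using assms(2,3) by auto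
  ultimately show ?thesis using continuous_on_compose2[OF assms(1)] by fastforce
qed

lemma continuous_on_slice_snd:
  assumes "continuous_on (S \<times> T) (\<lambda>p. F (fst p) (snd p))" "s \<in> S" "A \<subseteq> T"
  shows "continuous_on A (F s)"
proof -
  have "continuous_on A (\<lambda>v. (s, v))" by (intro continuous_intros)
  moreover have "(\<lambda>v. (s, v)) ` A \<subseteq> S \<times> T" using assms(2,3) by auto
  ultimately show ?thesis using continuous_on_compose2[OF assms(1)] by fastforce
qed

lemma has_partial_Time_integral:
  fixes F :: "real \<Rightarrow> real \<Rightarrow> 'a::banach"
  assumes F: "has_partial Time b F F'" and s: "s \<in> {0..<b}"
  shows "F s v = F 0 v + integral {0..s} (\<lambda>r. F' r v)"
proof -
  have "((\<lambda>r. F' r v) has_integral F s v - F 0 v) {0..s}"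
  proof (rule fundamental_theorem_of_calculus[of 0 s "\<lambda>r. F r v" "\<lambda>r. F' r v"])
    fix x assume "x \<in> {0..s}"
    with s have "x \<in> {0..<b}" by auto
    from has_partial_TimeD[OF F refl this]
    show "((\<lambda>r. F r v) has_vector_derivative F' x v) (at x within {0..s})"
      by (rule has_vector_derivative_within_subset) (use s in auto)
  qed (use s in auto)
  then show ?thesis by (simp add: integral_unique)
qed

lemma has_partial_Space_integral:
  fixes F :: "real \<Rightarrow> real \<Rightarrow> 'a::banach"
  assumes F: "has_partial Space b F F'" and t: "t \<in> {0..<b}" and "a \<le> v"
  shows "F t v = F t a + integral {a..v} (F' t)"
proof -
  have "(F' t has_integral F t v - F t a) {a..v}"
    using has_partial_SpaceD[OF F refl t] assms(3)
    by (intro fundamental_theorem_of_calculus[of a v "F t" "F' t"])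
      (auto intro: has_vector_derivative_at_within)
  then show ?thesis by (simp add: integral_unique)
qed

lemma integral_Space_has_Time_derivative:
  fixes G :: "real \<Rightarrow> real \<Rightarrow> 'a::banach"
  assumes G: "has_partial Time b G G'" and t: "t \<in> {0..<b}"
  shows "((\<lambda>s. integral {a..c} (G s)) has_vector_derivative integral {a..c} (G' t))
           (at t within {0..<b})"
proof -
  have "((\<lambda>s. integral (cbox a c) (G s)) has_vector_derivative integral (cbox a c) (G' t))
      (at t within {0..<b})"
  proof (rule leibniz_rule_vector_derivative[where f = G and fx = G'])
    show "((\<lambda>s. G s w) has_vector_derivative G' s w) (at s within {0..<b})" if "s \<in> {0..<b}" for s w
      using has_partial_TimeD[OF G refl that] .
    show "G s integrable_on cbox a c" if "s \<in> {0..<b}" for s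
      using continuous_on_slice_snd[OF has_partial_continuous[OF G] that]
      by (simp add: integrable_continuous_interval)
    have "continuous_on ({0..<b} \<times> cbox a c) (\<lambda>p. G' (fst p) (snd p))"
      by (rule continuous_on_subset[OF has_partial_continuous_deriv[OF G]]) auto
    then show "continuous_on ({0..<b} \<times> cbox a c) (\<lambda>(s, w). G' s w)"
      by (simp add: case_prod_beta)
  qed (use t in auto)
  then show ?thesis by (simp add: cbox_interval)
qed

lemma integral_Time_has_Space_derivative:
  fixes G :: "real \<Rightarrow> real \<Rightarrow> 'a::banach"
  assumes G: "has_partial Space b G G'" and s: "s \<in> {0..<b}"
  shows "((\<lambda>v. integral {0..s} (\<lambda>r. G r v)) has_vector_derivative integral {0..s} (\<lambda>r. G' r u))
           (at u)"
proof -
  have "((\<lambda>v. integral (cbox 0 s) (\<lambda>r. G r v)) has_vector_derivative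
      integral (cbox 0 s) (\<lambda>r. G' r u)) (at u within UNIV)"
  proof (rule leibniz_rule_vector_derivative[where f = "\<lambda>v r. G r v" and fx = "\<lambda>v r. G' r v"])
    show "((\<lambda>v. G r v) has_vector_derivative G' r v) (at v within UNIV)" if "r \<in> cbox 0 s" for v r
      using has_partial_SpaceD[OF G refl, of r] that s by auto
    show "(\<lambda>r. G r v) integrable_on cbox 0 s" for v
      using s by (auto intro!: integrable_continuous_interval
          continuous_on_slice_fst[OF has_partial_continuous[OF G]])
    have "continuous_on (UNIV \<times> {0..s}) ((\<lambda>p. G' (fst p) (snd p)) \<circ> (\<lambda>p. (snd p, fst p)))"
      using s by (intro continuous_on_compose continuous_intros
          continuous_on_subset[OF has_partial_continuous_deriv[OF G]]) (auto simp: case_prod_beta)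
    then show "continuous_on (UNIV \<times> cbox 0 s) (\<lambda>(v, r). G' r v)"
      by (simp add: o_def case_prod_beta)
  qed auto
  then show ?thesis by (simp add: cbox_interval)
qed

lemma has_vector_derivative_at_within_atLeastLessThan:
  assumes "\<And>c. t < c \<Longrightarrow> c < b \<Longrightarrow> (f has_vector_derivative f') (at t within {0..c})"
    and "t \<in> {0..<b}"
  shows "(f has_vector_derivative f') (at t within {0..<b})"
proof -
  define c where "c = (t + b) / 2"
  have c: "t < c" "c < b" using assms(2) by (auto simp: c_def)
  have "at t within {0..c} = at t within {0..<b}"
    by (rule at_within_nhd[where S = "{..<c}"]) (use c in auto)
  then show ?thesis using assms(1)[OF c] by simp
qed

text \<open>Symmetry of mixed partials: differentiate the fundamental theorem of calculus in one
  variable under the integral sign in the other.\<close>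

lemma has_partial_Time_of_Space:
  fixes F :: "real \<Rightarrow> real \<Rightarrow> 'a::banach"
  assumes Ft: "has_partial Time b F F_t" and Fu: "has_partial Space b F F_u"
    and Ftu: "has_partial Space b F_t F_tu"
  shows "has_partial Time b F_u F_tu"
proof (rule has_partialI)
  fix t u assume t: "t \<in> {0..<b}"
  have rep: "F_u s u = F_u 0 u + integral {0..s} (\<lambda>r. F_tu r u)" if s: "s \<in> {0..<b}" for s
  proof -
    have "((\<lambda>v. F 0 v + integral {0..s} (\<lambda>r. F_t r v)) has_vector_derivative
        F_u 0 u + integral {0..s} (\<lambda>r. F_tu r u)) (at u)"
      using has_partial_SpaceD[OF Fu refl, of 0] s
      by (intro has_vector_derivative_add integral_Time_has_Space_derivative[OF Ftu s]) auto
    moreover have "(\<lambda>v. F 0 v + integral {0..s} (\<lambda>r. F_t r v)) = F s"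
      using has_partial_Time_integral[OF Ft s] by auto
    ultimately show ?thesis
      using vector_derivative_unique_within[OF _ has_partial_SpaceD[OF Fu refl s]] by simp
  qed
  have "((\<lambda>s. integral {0..s} (\<lambda>r. F_tu r u)) has_vector_derivative F_tu t u) (at t within {0..<b})"
    using t
    by (intro has_vector_derivative_at_within_atLeastLessThan integral_has_vector_derivative
        continuous_on_slice_fst[OF has_partial_continuous_deriv[OF Ftu]]) auto
  then have "((\<lambda>s. F_u 0 u + integral {0..s} (\<lambda>r. F_tu r u)) has_vector_derivative F_tu t u)
      (at t within {0..<b})"
    by (rule has_vector_derivative_add[OF has_vector_derivative_const, simplified])
  then show "((\<lambda>s. F_u s u) has_vector_derivative F_tu t u) (at t within {0..<b})"
    by (rule has_vector_derivative_transform[OF t, rotated]) (erule rep)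
qed (auto intro: has_partial_continuous_deriv[OF Fu] has_partial_continuous_deriv[OF Ftu])

lemma has_partial_Space_of_Time:
  fixes F :: "real \<Rightarrow> real \<Rightarrow> 'a::banach"
  assumes Fu: "has_partial Space b F F_u" and Ft: "has_partial Time b F F_t"
    and Fut: "has_partial Time b F_u F_ut"
  shows "has_partial Space b F_t F_ut"
proof (rule has_partialI)
  fix t u :: real assume t: "t \<in> {0..<b}"
  define a where "a = u - 1"
  have rep: "F_t t v = F_t t a + integral {a..v} (F_ut t)" if v: "a < v" for v
  proof -
    have "((\<lambda>s. F s a + integral {a..v} (F_u s)) has_vector_derivative
        F_t t a + integral {a..v} (F_ut t)) (at t within {0..<b})"
      by (intro has_vector_derivative_add has_partial_TimeD[OF Ft refl t]
          integral_Space_has_Time_derivative[OF Fut t])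
    then have "((\<lambda>s. F s v) has_vector_derivative F_t t a + integral {a..v} (F_ut t))
        (at t within {0..<b})"
      by (rule has_vector_derivative_transform[OF t, rotated])
        (use v in \<open>auto intro: has_partial_Space_integral[OF Fu]\<close>)
    then show ?thesis
      using vector_derivative_unique_within[OF at_within_atLeastLessThan_nontrivial[OF t]
          has_partial_TimeD[OF Ft refl t]] by simp
  qed
  have "((\<lambda>v. integral {a..v} (F_ut t)) has_vector_derivative F_ut t u) (at u within {a..u+1})"
    by (rule integral_has_vector_derivative)
      (use t in \<open>auto intro!: continuous_on_slice_snd[OF has_partial_continuous_deriv[OF Fut]]
        simp: a_def\<close>)
  moreover have "at u within {a..u+1} = at u"
    by (rule at_within_interior) (simp add: a_def)
  ultimately have "((\<lambda>v. integral {a..v} (F_ut t)) has_vector_derivative F_ut t u) (at u)"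
    by simp
  then have "((\<lambda>v. F_t t a + integral {a..v} (F_ut t)) has_vector_derivative F_ut t u) (at u)"
    by (rule has_vector_derivative_add[OF has_vector_derivative_const, simplified])
  then show "((\<lambda>v. F_t t v) has_vector_derivative F_ut t u) (at u)"
  proof (rule has_vector_derivative_transform_within_open[where S = "{a<..}"])
    show "u \<in> {a<..}" by (simp add: a_def)
  qed (auto simp: rep)
qed (auto intro: has_partial_continuous_deriv[OF Ft] has_partial_continuous_deriv[OF Fut])

lemma has_vector_derivative_inner_const:
  fixes f g :: "real \<Rightarrow> 'a::real_inner"
  assumes f: "(f has_vector_derivative f') (at x within S)"
    and g: "(g has_vector_derivative g') (at x within S)"
    and "at x within S \<noteq> bot" "x \<in> S" "\<And>y. y \<in> S \<Longrightarrow> f y \<bullet> g y = c"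
  shows "f x \<bullet> g' + f' \<bullet> g x = 0"
proof -
  have "((\<lambda>y. f y \<bullet> g y) has_vector_derivative f x \<bullet> g' + f' \<bullet> g x) (at x within S)"
    by (rule bounded_bilinear.has_vector_derivative[OF bounded_bilinear_inner f g])
  moreover have "((\<lambda>y. f y \<bullet> g y) has_vector_derivative 0) (at x within S)"
    by (rule has_vector_derivative_transform[OF assms(4) _ has_vector_derivative_const[of c]])
      (simp add: assms(5))
  ultimately show ?thesis using vector_derivative_unique_within[OF assms(3)] by blast
qed

lemma inner_eq_orthonormal_frame_coordinates:
  fixes T N x y :: "real^3"
  assumes TT: "T \<bullet> T = 1" and NN: "N \<bullet> N = 1" and TN: "T \<bullet> N = 0"
  shows "x \<bullet> y = (x \<bullet> T) * (y \<bullet> T) + (x \<bullet> N) * (y \<bullet> N) + (x \<bullet> cross3 T N) * (y \<bullet> cross3 T N)"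
proof -
  define B where "B = cross3 T N"
  have BT: "B \<bullet> T = 0" and BN: "B \<bullet> N = 0" unfolding B_def by (simp_all add: dot_cross_self)
  have BB: "B \<bullet> B = 1" unfolding B_def dot_cross using TT NN TN by (simp add: inner_commute)
  define w where "w = x - (x \<bullet> T) *\<^sub>R T - (x \<bullet> N) *\<^sub>R N - (x \<bullet> B) *\<^sub>R B"
  have NT: "N \<bullet> T = 0" and TB: "T \<bullet> B = 0" and NB: "N \<bullet> B = 0"
    using TN BT BN by (simp_all add: inner_commute)
  have wT: "w \<bullet> T = 0" unfolding w_def using TT NT BT by (simp add: inner_diff_left)
  have wN: "w \<bullet> N = 0" unfolding w_def using NN TN BN by (simp add: inner_diff_left)
  have wB: "w \<bullet> B = 0" unfolding w_def using BB TB NB by (simp add: inner_diff_left)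
  have "cross3 B w = - cross3 w (cross3 T N)" unfolding B_def by (metis cross_skew)
  also have "\<dots> = - ((w \<bullet> N) *\<^sub>R T - (w \<bullet> T) *\<^sub>R N)" by (simp add: Lagrange)
  also have "\<dots> = 0" using wT wN by simp
  finally have "cross3 B w = 0" .
  then have "0 = (B \<bullet> w) *\<^sub>R B - (B \<bullet> B) *\<^sub>R w" by (metis Lagrange cross_zero_right)
  then have "w = 0" using wB BB by (simp add: inner_commute)
  then have "x = (x \<bullet> T) *\<^sub>R T + (x \<bullet> N) *\<^sub>R N + (x \<bullet> B) *\<^sub>R B"
    unfolding w_def by (simp add: algebra_simps)
  then have "x \<bullet> y = ((x \<bullet> T) *\<^sub>R T + (x \<bullet> N) *\<^sub>R N + (x \<bullet> B) *\<^sub>R B) \<bullet> y" by simp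
  also have "\<dots> = (x \<bullet> T) * (y \<bullet> T) + (x \<bullet> N) * (y \<bullet> N) + (x \<bullet> B) * (y \<bullet> B)"
    by (simp add: inner_add_left inner_commute[of T y] inner_commute[of N y] inner_commute[of B y])
  finally show ?thesis unfolding B_def .
qed

lemma integer_valued_continuous_on_constant:
  fixes f :: "'a::topological_space \<Rightarrow> real"
  assumes "connected S" "continuous_on S f" "\<And>x. x \<in> S \<Longrightarrow> f x \<in> \<int>"
  shows "f constant_on S"
proof (rule continuous_discrete_range_constant[OF assms(1,2)])
  fix x assume x: "x \<in> S"
  have "1 \<le> norm (f y - f x)" if "y \<in> S" "f y \<noteq> f x" for y
    using assms(3)[OF x] assms(3)[OF that(1)] that(2)
    by (auto elim!: Ints_cases)
  then show "\<exists>e>0. \<forall>y. y \<in> S \<and> f y \<noteq> f x \<longrightarrow> e \<le> norm (f y - f x)"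
    by (intro exI[of _ 1]) auto
qed

lemma Cmn_has_partial_Space:
  assumes "Cmn m n {0..<b} F" "i \<le> m" "j < n"
  shows "has_partial Space b ((pdu ^^ j) ((pdt {0..<b} ^^ i) F))
           ((pdu ^^ Suc j) ((pdt {0..<b} ^^ i) F))"
proof -
  note C = assms(1)[unfolded Cmn_def, rule_format, OF assms(2)]
  from C[of j] C[of "Suc j"] assms(3) show ?thesis
    by (intro has_partialI) (auto simp: case_prod_beta)
qed

lemma Cmn_has_partial_Time:
  assumes "Cmn m n {0..<b} F" "i < m"
  shows "has_partial Time b ((pdt {0..<b} ^^ i) F) ((pdt {0..<b} ^^ Suc i) F)"
proof -
  note C = assms(1)[unfolded Cmn_def, rule_format]
  from C[of i 0] C[of "Suc i" 0] assms(2) show ?thesis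
    by (intro has_partialI) (auto simp: case_prod_beta)
qed

section \<open>Algebraic expressions in the \<open>u\<close>-derivatives of a curve\<close>

lemma bounded_bilinear_cross3: "bounded_bilinear cross3"
  using bilinear_conv_bounded_bilinear bilinear_cross by blast

text \<open>Scalar and vector fields that are algebraic expressions in finitely many \<open>u\<close>-derivatives
  of \<open>gam\<close>. Every Frenet quantity of the flow is of this form, so its regularity and
  periodicity are inherited from \<open>gam\<close> by induction over the expression.\<close>

inductive jet_scalar :: "real \<Rightarrow> (real \<Rightarrow> real \<Rightarrow> real^3) \<Rightarrow> (real \<Rightarrow> real \<Rightarrow> real) \<Rightarrow> bool"
  and jet_vector :: "real \<Rightarrow> (real \<Rightarrow> real \<Rightarrow> real^3) \<Rightarrow> (real \<Rightarrow> real \<Rightarrow> real^3) \<Rightarrow> bool"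
  for b gam
where
  jet_derivative: "jet_vector b gam ((pdu ^^ j) gam)"
| jet_const: "jet_scalar b gam (\<lambda>t u. c)"
| jet_add: "jet_scalar b gam F \<Longrightarrow> jet_scalar b gam G \<Longrightarrow> jet_scalar b gam (\<lambda>t u. F t u + G t u)"
| jet_mult: "jet_scalar b gam F \<Longrightarrow> jet_scalar b gam G \<Longrightarrow> jet_scalar b gam (\<lambda>t u. F t u * G t u)"
| jet_inverse: "jet_scalar b gam F \<Longrightarrow> (\<And>t u. t \<in> {0..<b} \<Longrightarrow> F t u \<noteq> 0) \<Longrightarrow>
    jet_scalar b gam (\<lambda>t u. 1 / F t u)"
| jet_inner: "jet_vector b gam V \<Longrightarrow> jet_vector b gam W \<Longrightarrow> jet_scalar b gam (\<lambda>t u. V t u \<bullet> W t u)"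
| jet_norm: "jet_vector b gam V \<Longrightarrow> (\<And>t u. t \<in> {0..<b} \<Longrightarrow> V t u \<noteq> 0) \<Longrightarrow>
    jet_scalar b gam (\<lambda>t u. norm (V t u))"
| jet_scalar_cong: "jet_scalar b gam F \<Longrightarrow> (\<And>t u. t \<in> {0..<b} \<Longrightarrow> F t u = G t u) \<Longrightarrow>
    jet_scalar b gam G"
| jet_vector_add: "jet_vector b gam V \<Longrightarrow> jet_vector b gam W \<Longrightarrow> jet_vector b gam (\<lambda>t u. V t u + W t u)"
| jet_scaleR: "jet_scalar b gam F \<Longrightarrow> jet_vector b gam V \<Longrightarrow> jet_vector b gam (\<lambda>t u. F t u *\<^sub>R V t u)"
| jet_cross: "jet_vector b gam V \<Longrightarrow> jet_vector b gam W \<Longrightarrow>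
    jet_vector b gam (\<lambda>t u. cross3 (V t u) (W t u))"
| jet_vector_cong: "jet_vector b gam V \<Longrightarrow> (\<And>t u. t \<in> {0..<b} \<Longrightarrow> V t u = W t u) \<Longrightarrow>
    jet_vector b gam W"

lemmas jet_intros = jet_derivative jet_const jet_add jet_mult jet_inverse jet_inner jet_norm
  jet_vector_add jet_scaleR jet_cross

lemma jet_has_Space_partial:
  assumes gam: "\<And>j. has_partial Space b ((pdu ^^ j) gam) ((pdu ^^ Suc j) gam)"
  shows "jet_scalar b gam F \<Longrightarrow> \<exists>F'. jet_scalar b gam F' \<and> has_partial Space b F F'"
    and "jet_vector b gam V \<Longrightarrow> \<exists>V'. jet_vector b gam V' \<and> has_partial Space b V V'"
proof (induction rule: jet_scalar_jet_vector.inducts)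
  case (jet_derivative j)
  show ?case using gam jet_intros(1)[of b gam "Suc j"] by blast
next
  case (jet_const c)
  show ?case using has_partial_const jet_intros(2) by blast
next
  case (jet_add F G)
  then obtain F' G' where d: "jet_scalar b gam F'" "has_partial Space b F F'"
    "jet_scalar b gam G'" "has_partial Space b G G'" by blast
  have "jet_scalar b gam (\<lambda>t u. F' t u + G' t u)" using d by (intro jet_intros)
  then show ?case using has_partial_add[OF d(2,4)] by blast
next
  case (jet_mult F G)
  then obtain F' G' where d: "jet_scalar b gam F'" "has_partial Space b F F'"
    "jet_scalar b gam G'" "has_partial Space b G G'" by blast
  have "jet_scalar b gam (\<lambda>t u. F t u * G' t u + F' t u * G t u)"
    using jet_mult d by (intro jet_intros)
  then show ?case using has_partial_bilinear[OF bounded_bilinear_mult d(2,4)] by blast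
next
  case (jet_inverse F)
  then obtain F' where d: "jet_scalar b gam F'" "has_partial Space b F F'" by blast
  have "jet_scalar b gam (\<lambda>t u. (- 1) * ((1 / F t u) * (1 / F t u)) * F' t u)"
    using jet_inverse d by (intro jet_intros)
  then have "jet_scalar b gam (\<lambda>t u. - (1 / F t u)\<^sup>2 * F' t u)"
    by (rule jet_scalar_cong) (simp add: power2_eq_square)
  then show ?case using has_partial_inverse[OF d(2) \<open>\<And>t u. t \<in> {0..<b} \<Longrightarrow> F t u \<noteq> 0\<close>] by blast
next
  case (jet_inner V W)
  then obtain V' W' where d: "jet_vector b gam V'" "has_partial Space b V V'"
    "jet_vector b gam W'" "has_partial Space b W W'" by blast
  have "jet_scalar b gam (\<lambda>t u. V t u \<bullet> W' t u + V' t u \<bullet> W t u)"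
    using jet_inner d by (intro jet_intros)
  then show ?case using has_partial_bilinear[OF bounded_bilinear_inner d(2,4)] by blast
next
  case (jet_norm V)
  then obtain V' where d: "jet_vector b gam V'" "has_partial Space b V V'" by blast
  have "jet_scalar b gam (\<lambda>t u. (V t u \<bullet> V' t u) * (1 / norm (V t u)))"
    using jet_norm d by (intro jet_intros) auto
  then have "jet_scalar b gam (\<lambda>t u. (V t u \<bullet> V' t u) / norm (V t u))"
    by (rule jet_scalar_cong) simp
  then show ?case using has_partial_norm[OF d(2) \<open>\<And>t u. t \<in> {0..<b} \<Longrightarrow> V t u \<noteq> 0\<close>] by blast
next
  case (jet_scalar_cong F G)
  then obtain F' where "jet_scalar b gam F'" "has_partial Space b F F'" by blast
  then show ?case using has_partial_cong[of Space b F F' G F'] jet_scalar_cong(3) by blast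
next
  case (jet_vector_add V W)
  then obtain V' W' where d: "jet_vector b gam V'" "has_partial Space b V V'"
    "jet_vector b gam W'" "has_partial Space b W W'" by blast
  have "jet_vector b gam (\<lambda>t u. V' t u + W' t u)" using d by (intro jet_intros)
  then show ?case using has_partial_add[OF d(2,4)] by blast
next
  case (jet_scaleR F V)
  then obtain F' V' where d: "jet_scalar b gam F'" "has_partial Space b F F'"
    "jet_vector b gam V'" "has_partial Space b V V'" by blast
  have "jet_vector b gam (\<lambda>t u. F t u *\<^sub>R V' t u + F' t u *\<^sub>R V t u)"
    using jet_scaleR d by (intro jet_intros)
  then show ?case using has_partial_bilinear[OF bounded_bilinear_scaleR d(2,4)] by blast
next
  case (jet_cross V W)
  then obtain V' W' where d: "jet_vector b gam V'" "has_partial Space b V V'"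
    "jet_vector b gam W'" "has_partial Space b W W'" by blast
  have "jet_vector b gam (\<lambda>t u. cross3 (V t u) (W' t u) + cross3 (V' t u) (W t u))"
    using jet_cross d by (intro jet_intros)
  then show ?case using has_partial_bilinear[OF bounded_bilinear_cross3 d(2,4)] by blast
next
  case (jet_vector_cong V W)
  then obtain V' where "jet_vector b gam V'" "has_partial Space b V V'" by blast
  then show ?case using has_partial_cong[of Space b V V' W V'] jet_vector_cong(3) by blast
qed

lemma jet_has_Time_partial:
  assumes gam: "\<And>j. \<exists>D. has_partial Time b ((pdu ^^ j) gam) D"
  shows "jet_scalar b gam F \<Longrightarrow> \<exists>F'. has_partial Time b F F'"
    and "jet_vector b gam V \<Longrightarrow> \<exists>V'. has_partial Time b V V'"
proof (induction rule: jet_scalar_jet_vector.inducts)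
  case (jet_derivative j)
  show ?case by (rule gam)
next
  case (jet_const c)
  show ?case using has_partial_const by blast
next
  case (jet_add F G)
  then show ?case using has_partial_add by blast
next
  case (jet_mult F G)
  then show ?case using has_partial_bilinear[OF bounded_bilinear_mult] by blast
next
  case (jet_inverse F)
  then show ?case using has_partial_inverse by blast
next
  case (jet_inner V W)
  then show ?case using has_partial_bilinear[OF bounded_bilinear_inner] by blast
next
  case (jet_norm V)
  then show ?case using has_partial_norm by blast
next
  case (jet_scalar_cong F G)
  then obtain F' where "has_partial Time b F F'" by blast
  then show ?case using has_partial_cong[of Time b F F' G F'] jet_scalar_cong(3) by blast
next
  case (jet_vector_add V W)
  then show ?case using has_partial_add by blast
next
  case (jet_scaleR F V)
  then show ?case using has_partial_bilinear[OF bounded_bilinear_scaleR] by blast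
next
  case (jet_cross V W)
  then show ?case using has_partial_bilinear[OF bounded_bilinear_cross3] by blast
next
  case (jet_vector_cong V W)
  then obtain V' where "has_partial Time b V V'" by blast
  then show ?case using has_partial_cong[of Time b V V' W V'] jet_vector_cong(3) by blast
qed

lemma jet_periodic:
  assumes gam: "\<And>j t u. t \<in> {0..<b} \<Longrightarrow> (pdu ^^ j) gam t (u + p) = (pdu ^^ j) gam t u"
  shows "jet_scalar b gam F \<Longrightarrow> t \<in> {0..<b} \<Longrightarrow> F t (u + p) = F t u"
    and "jet_vector b gam V \<Longrightarrow> t \<in> {0..<b} \<Longrightarrow> V t (u + p) = V t u"
  by (induction rule: jet_scalar_jet_vector.inducts) (auto simp: gam)

lemma
  assumes gam: "\<And>j. has_partial Space b ((pdu ^^ j) gam) ((pdu ^^ Suc j) gam)"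
  shows jet_scalar_pdu:
      "jet_scalar b gam F \<Longrightarrow> jet_scalar b gam (pdu F) \<and> has_partial Space b F (pdu F)"
    and jet_vector_pdu:
      "jet_vector b gam V \<Longrightarrow> jet_vector b gam (pdu V) \<and> has_partial Space b V (pdu V)"
proof -
  assume "jet_scalar b gam F"
  then obtain F' where "jet_scalar b gam F'" "has_partial Space b F F'"
    using jet_has_Space_partial(1)[OF gam] by blast
  then show "jet_scalar b gam (pdu F) \<and> has_partial Space b F (pdu F)"
    by (auto intro: jet_scalar_cong has_partial_Space_pdu simp: has_partial_Space_pdu(2))
next
  assume "jet_vector b gam V"
  then obtain V' where "jet_vector b gam V'" "has_partial Space b V V'"
    using jet_has_Space_partial(2)[OF gam] by blast
  then show "jet_vector b gam (pdu V) \<and> has_partial Space b V (pdu V)"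
    by (auto intro: jet_vector_cong has_partial_Space_pdu simp: has_partial_Space_pdu(2))
qed

lemma
  assumes gam: "\<And>j. \<exists>D. has_partial Time b ((pdu ^^ j) gam) D"
  shows jet_scalar_pdt: "jet_scalar b gam F \<Longrightarrow> has_partial Time b F (pdt {0..<b} F)"
    and jet_vector_pdt: "jet_vector b gam V \<Longrightarrow> has_partial Time b V (pdt {0..<b} V)"
  using jet_has_Time_partial[OF gam] has_partial_Time_pdt(1) by blast+

section \<open>The total torsion along the framed curvature flow\<close>

locale framed_curvature_flow =
  fixes gam :: "real \<Rightarrow> real \<Rightarrow> real^3" and th :: "real \<Rightarrow> real \<Rightarrow> real" and tb :: real
  assumes gam_smooth: "smooth_flow {0..<tb} gam"
    and gam_closed: "\<And>t u. t \<in> {0..<tb} \<Longrightarrow> gam t (u + 2*pi) = gam t u"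
    and gam_regular: "\<And>t u. t \<in> {0..<tb} \<Longrightarrow> vector_derivative (gam t) (at u) \<noteq> 0"
    and th_smooth: "has_partial Space tb th (pdu th)"
    and th_closed: "\<And>t. t \<in> {0..<tb} \<Longrightarrow> \<exists>k::int. th t (2*pi) = th t 0 + 2*pi*k"
    and kappa_pos: "\<And>t u. t \<in> {0..<tb} \<Longrightarrow> curv (gam t) u > 0"
    and flow_gam: "\<And>t u. t \<in> {0..<tb} \<Longrightarrow>
        ((\<lambda>s. gam s u) has_vector_derivative (curv (gam t) u *\<^sub>R nu_fr (gam t) (th t) u))
          (at t within {0..<tb})"
begin

abbreviation spd :: "real \<Rightarrow> real \<Rightarrow> real" where "spd t \<equiv> speed (gam t)"
abbreviation T :: "real \<Rightarrow> real \<Rightarrow> real^3" where "T t \<equiv> tangent (gam t)"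
abbreviation kap :: "real \<Rightarrow> real \<Rightarrow> real" where "kap t \<equiv> curv (gam t)"
abbreviation N :: "real \<Rightarrow> real \<Rightarrow> real^3" where "N t \<equiv> normal (gam t)"
abbreviation B :: "real \<Rightarrow> real \<Rightarrow> real^3" where "B t \<equiv> binormal (gam t)"

abbreviation torsion_flux :: "real \<Rightarrow> real \<Rightarrow> real" where
  "torsion_flux t \<equiv> \<lambda>u. psi1 (gam t) (th t) u * psi3 (gam t) (th t) u * kap t u
                        + psi2 (gam t) (th t) u * sdr (gam t) (kap t) u"

lemma u_derivatives_Space: "has_partial Space tb ((pdu ^^ j) gam) ((pdu ^^ Suc j) gam)"
  using Cmn_has_partial_Space[of 0 "Suc j" tb gam 0 j] gam_smooth by (simp add: smooth_flow_def)

lemma velocity_u_derivatives_Space: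
  "has_partial Space tb ((pdu ^^ j) (pdt {0..<tb} gam)) ((pdu ^^ Suc j) (pdt {0..<tb} gam))"
  using Cmn_has_partial_Space[of 1 "Suc j" tb gam 1 j] gam_smooth by (simp add: smooth_flow_def)

lemma u_derivatives_Time: "has_partial Time tb ((pdu ^^ j) gam) ((pdu ^^ j) (pdt {0..<tb} gam))"
proof (induction j)
  case 0
  show ?case using Cmn_has_partial_Time[of 1 0 tb gam 0] gam_smooth by (simp add: smooth_flow_def)
next
  case (Suc j)
  show ?case
    by (rule has_partial_Time_of_Space[OF Suc u_derivatives_Space velocity_u_derivatives_Space])
qed

lemma u_derivatives_periodic: "t \<in> {0..<tb} \<Longrightarrow> (pdu ^^ j) gam t (u + 2*pi) = (pdu ^^ j) gam t u"
proof (induction j arbitrary: u)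
  case 0
  then show ?case by (simp add: gam_closed)
next
  case (Suc j)
  note D = has_partial_SpaceD[OF u_derivatives_Space refl Suc.prems]
  have "(((pdu ^^ j) gam t \<circ> (\<lambda>v. v + 2*pi)) has_vector_derivative
      1 *\<^sub>R (pdu ^^ Suc j) gam t (u + 2*pi)) (at u)"
    by (rule vector_diff_chain_at[of "\<lambda>v. v + 2*pi" 1 u "(pdu ^^ j) gam t", OF _ D])
      (auto intro!: derivative_eq_intros)
  moreover have "(pdu ^^ j) gam t \<circ> (\<lambda>v. v + 2*pi) = (pdu ^^ j) gam t"
    using Suc.IH[OF Suc.prems] by auto
  ultimately show ?case using vector_derivative_unique_at[OF D] by simp
qed

lemmas jet_scalar_Space = jet_scalar_pdu[OF u_derivatives_Space]
lemmas jet_vector_Space = jet_vector_pdu[OF u_derivatives_Space]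
lemmas jet_scalar_Time = jet_scalar_pdt[OF exI, OF u_derivatives_Time]
lemmas jet_vector_Time = jet_vector_pdt[OF exI, OF u_derivatives_Time]
lemma jet_vector_periodic: "jet_vector tb gam F \<Longrightarrow> t \<in> {0..<tb} \<Longrightarrow> F t (u + 2*pi) = F t u"
  using jet_periodic(2)[of tb gam "2*pi"] u_derivatives_periodic by blast

lemma jet_scalar_has_pdu:
  "jet_scalar tb gam F \<Longrightarrow> t \<in> {0..<tb} \<Longrightarrow> (F t has_real_derivative pdu F t u) (at u)"
  using has_partial_SpaceD jet_scalar_Space
  by (simp add: has_real_derivative_iff_has_vector_derivative) blast

lemma jet_vector_has_pdu:
  "jet_vector tb gam F \<Longrightarrow> t \<in> {0..<tb} \<Longrightarrow> (F t has_vector_derivative pdu F t u) (at u)"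
  using has_partial_SpaceD jet_vector_Space by blast

lemma jet_vector_has_pdt: "jet_vector tb gam F \<Longrightarrow> t \<in> {0..<tb} \<Longrightarrow>
    ((\<lambda>s. F s u) has_vector_derivative pdt {0..<tb} F t u) (at t within {0..<tb})"
  using has_partial_TimeD jet_vector_Time by blast

lemma jet_vector_continuous_on: "jet_vector tb gam F \<Longrightarrow> t \<in> {0..<tb} \<Longrightarrow> continuous_on A (F t)"
  using continuous_on_slice_snd has_partial_continuous jet_vector_Space by blast

lemma jet_vector_pdt_continuous_on:
  "jet_vector tb gam F \<Longrightarrow> t \<in> {0..<tb} \<Longrightarrow> continuous_on A (pdt {0..<tb} F t)"
  using continuous_on_slice_snd has_partial_continuous_deriv jet_vector_Time by blast

lemma jet_pdu_gam: "jet_vector tb gam (pdu gam)"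
  using jet_derivative[of tb gam "Suc 0"] by simp

lemma speed_eq: "spd t u = norm (pdu gam t u)"
  by (simp add: speed_def pdu_def)

lemma speed_pos: "t \<in> {0..<tb} \<Longrightarrow> 0 < spd t u"
  using gam_regular by (simp add: speed_def)

lemma speed_nonzero: "t \<in> {0..<tb} \<Longrightarrow> spd t u \<noteq> 0"
  using speed_pos by (metis less_irrefl)

lemma curv_nonzero: "t \<in> {0..<tb} \<Longrightarrow> kap t u \<noteq> 0"
  using kappa_pos by (metis less_irrefl)

lemma jet_speed: "jet_scalar tb gam spd"
proof -
  have "jet_scalar tb gam (\<lambda>t u. norm (pdu gam t u))"
    using gam_regular by (intro jet_norm jet_pdu_gam) (simp add: pdu_def)
  then show ?thesis by (rule jet_scalar_cong) (simp add: speed_eq)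
qed

lemma tangent_eq: "T t u = (1 / spd t u) *\<^sub>R pdu gam t u"
  by (simp add: tangent_def sdv_def pdu_def)

lemma jet_tangent: "jet_vector tb gam T"
proof -
  have "jet_vector tb gam (\<lambda>t u. (1 / spd t u) *\<^sub>R pdu gam t u)"
    by (intro jet_intros jet_speed jet_pdu_gam) (use speed_nonzero in blast)
  then show ?thesis by (rule jet_vector_cong) (simp add: tangent_eq)
qed

lemma curvature_vector_eq: "sdv (gam t) (T t) u = (1 / spd t u) *\<^sub>R pdu T t u"
  by (simp add: sdv_def pdu_def)

lemma jet_curvature_vector: "jet_vector tb gam (\<lambda>t. sdv (gam t) (T t))"
proof -
  have "jet_vector tb gam (\<lambda>t u. (1 / spd t u) *\<^sub>R pdu T t u)"
    by (intro jet_intros jet_speed conjunct1[OF jet_vector_Space[OF jet_tangent]])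
      (use speed_nonzero in blast)
  then show ?thesis by (rule jet_vector_cong) (simp add: curvature_vector_eq)
qed

lemma jet_curv: "jet_scalar tb gam kap"
proof -
  have "jet_scalar tb gam (\<lambda>t u. norm (sdv (gam t) (T t) u))"
    by (intro jet_norm jet_curvature_vector) (use kappa_pos in \<open>fastforce simp: curv_def\<close>)
  then show ?thesis by (rule jet_scalar_cong) (simp add: curv_def)
qed

lemma jet_normal: "jet_vector tb gam N"
proof -
  have "jet_vector tb gam (\<lambda>t u. (1 / kap t u) *\<^sub>R sdv (gam t) (T t) u)"
    by (intro jet_intros jet_curv jet_curvature_vector) (use curv_nonzero in blast)
  then show ?thesis by (rule jet_vector_cong) (simp add: normal_def)
qed

lemma jet_binormal: "jet_vector tb gam B"
proof -
  have "jet_vector tb gam (\<lambda>t u. cross3 (T t u) (N t u))"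
    by (intro jet_intros jet_tangent jet_normal)
  then show ?thesis by (rule jet_vector_cong) (simp add: binormal_def)
qed

lemma tors_mult_speed: "t \<in> {0..<tb} \<Longrightarrow> tors (gam t) u * spd t u = pdu N t u \<bullet> B t u"
  using speed_pos[of t u] by (simp add: tors_def sdv_def pdu_def)

lemma tangent_unit: "t \<in> {0..<tb} \<Longrightarrow> T t u \<bullet> T t u = 1"
proof -
  assume "t \<in> {0..<tb}"
  then have "norm (T t u) = 1" using speed_pos[of t u] by (simp add: tangent_eq speed_eq)
  then show ?thesis by (simp add: norm_eq_1)
qed

lemma normal_unit: "t \<in> {0..<tb} \<Longrightarrow> N t u \<bullet> N t u = 1"
proof -
  assume "t \<in> {0..<tb}"
  then have "norm (N t u) = 1" using kappa_pos[of t u] by (simp add: normal_def curv_def)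
  then show ?thesis by (simp add: norm_eq_1)
qed

lemma tangent_pdu: "t \<in> {0..<tb} \<Longrightarrow> pdu T t u = (spd t u * kap t u) *\<^sub>R N t u"
  using speed_pos[of t u] kappa_pos[of t u] by (simp add: normal_def curvature_vector_eq)

lemma tangent_normal_orthogonal:
  assumes t: "t \<in> {0..<tb}"
  shows "T t u \<bullet> N t u = 0"
proof -
  note dT = jet_vector_has_pdu[OF jet_tangent t]
  have "T t u \<bullet> pdu T t u + pdu T t u \<bullet> T t u = 0"
    by (rule has_vector_derivative_inner_const[OF dT dT]) (simp_all add: tangent_unit[OF t])
  then have "(spd t u * kap t u) * (T t u \<bullet> N t u) = 0"
    by (auto simp: tangent_pdu[OF t] inner_commute)
  then show ?thesis using speed_nonzero[OF t, of u] curv_nonzero[OF t, of u] by simp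
qed

lemma binormal_frame:
  assumes "t \<in> {0..<tb}"
  shows "T t u \<bullet> B t u = 0" and "N t u \<bullet> B t u = 0" and "B t u \<bullet> B t u = 1"
  using tangent_unit[OF assms] normal_unit[OF assms] tangent_normal_orthogonal[OF assms]
  by (simp_all add: binormal_def dot_cross_self dot_cross inner_commute)

lemma frame_coordinates:
  "t \<in> {0..<tb} \<Longrightarrow>
    x \<bullet> y = (x \<bullet> T t u) * (y \<bullet> T t u) + (x \<bullet> N t u) * (y \<bullet> N t u) + (x \<bullet> B t u) * (y \<bullet> B t u)"
  unfolding binormal_def
  by (rule inner_eq_orthonormal_frame_coordinates[OF tangent_unit normal_unit
        tangent_normal_orthogonal])

lemma frame_pdu_relations:
  assumes t: "t \<in> {0..<tb}"
  shows "pdu N t u \<bullet> N t u = 0" and "pdu N t u \<bullet> T t u = - (spd t u * kap t u)"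
    and "pdu B t u \<bullet> B t u = 0" and "pdu B t u \<bullet> T t u = 0"
proof -
  note dT = jet_vector_has_pdu[OF jet_tangent t]
    and dN = jet_vector_has_pdu[OF jet_normal t]
    and dB = jet_vector_has_pdu[OF jet_binormal t]
  have "N t u \<bullet> pdu N t u + pdu N t u \<bullet> N t u = 0"
    by (rule has_vector_derivative_inner_const[OF dN dN]) (simp_all add: normal_unit[OF t])
  then show "pdu N t u \<bullet> N t u = 0" by (simp add: inner_commute)
  have "T t u \<bullet> pdu N t u + pdu T t u \<bullet> N t u = 0"
    by (rule has_vector_derivative_inner_const[OF dT dN])
      (simp_all add: tangent_normal_orthogonal[OF t])
  then have "T t u \<bullet> pdu N t u = - (spd t u * kap t u)"
    by (simp add: tangent_pdu[OF t] normal_unit[OF t])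
  then show "pdu N t u \<bullet> T t u = - (spd t u * kap t u)" by (simp add: inner_commute)
  have "B t u \<bullet> pdu B t u + pdu B t u \<bullet> B t u = 0"
    by (rule has_vector_derivative_inner_const[OF dB dB]) (simp_all add: binormal_frame(3)[OF t])
  then show "pdu B t u \<bullet> B t u = 0" by (simp add: inner_commute)
  have "T t u \<bullet> pdu B t u + pdu T t u \<bullet> B t u = 0"
    by (rule has_vector_derivative_inner_const[OF dT dB]) (simp_all add: binormal_frame(1)[OF t])
  then have "T t u \<bullet> pdu B t u = 0" by (simp add: tangent_pdu[OF t] binormal_frame(2)[OF t])
  then show "pdu B t u \<bullet> T t u = 0" by (simp add: inner_commute)
qed

lemma frame_pdt_relations:
  assumes t: "t \<in> {0..<tb}"
  shows "pdt {0..<tb} N t u \<bullet> N t u = 0" and "pdt {0..<tb} B t u \<bullet> B t u = 0"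
    and "pdt {0..<tb} B t u \<bullet> T t u = - (pdt {0..<tb} T t u \<bullet> B t u)"
proof -
  note nontriv = at_within_atLeastLessThan_nontrivial[OF t]
  note dT = jet_vector_has_pdt[OF jet_tangent t, of u]
    and dN = jet_vector_has_pdt[OF jet_normal t, of u]
    and dB = jet_vector_has_pdt[OF jet_binormal t, of u]
  have "N t u \<bullet> pdt {0..<tb} N t u + pdt {0..<tb} N t u \<bullet> N t u = 0"
    by (rule has_vector_derivative_inner_const[OF dN dN nontriv t]) (simp add: normal_unit)
  then show "pdt {0..<tb} N t u \<bullet> N t u = 0" by (simp add: inner_commute)
  have "B t u \<bullet> pdt {0..<tb} B t u + pdt {0..<tb} B t u \<bullet> B t u = 0"
    by (rule has_vector_derivative_inner_const[OF dB dB nontriv t]) (simp add: binormal_frame(3))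
  then show "pdt {0..<tb} B t u \<bullet> B t u = 0" by (simp add: inner_commute)
  have "T t u \<bullet> pdt {0..<tb} B t u + pdt {0..<tb} T t u \<bullet> B t u = 0"
    by (rule has_vector_derivative_inner_const[OF dT dB nontriv t]) (simp add: binormal_frame(1))
  then show "pdt {0..<tb} B t u \<bullet> T t u = - (pdt {0..<tb} T t u \<bullet> B t u)"
    by (simp add: inner_commute)
qed


lemma tangent_pdt_binormal:
  assumes t: "t \<in> {0..<tb}"
  shows "pdt {0..<tb} T t u \<bullet> B t u = (pdu (pdt {0..<tb} gam) t u \<bullet> B t u) / spd t u"
proof -
  have inv: "has_partial Time tb (\<lambda>s v. 1 / spd s v)
      (\<lambda>s v. - (1 / spd s v)\<^sup>2 * pdt {0..<tb} spd s v)"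
    by (rule has_partial_inverse[OF jet_scalar_Time[OF jet_speed] speed_nonzero])
  have "has_partial Time tb (\<lambda>s v. (1 / spd s v) *\<^sub>R pdu gam s v)
      (\<lambda>s v. (1 / spd s v) *\<^sub>R pdu (pdt {0..<tb} gam) s v
        + (- (1 / spd s v)\<^sup>2 * pdt {0..<tb} spd s v) *\<^sub>R pdu gam s v)"
    using has_partial_bilinear[OF bounded_bilinear_scaleR inv u_derivatives_Time[of "Suc 0"]]
    by simp
  then have "has_partial Time tb T
      (\<lambda>s v. (1 / spd s v) *\<^sub>R pdu (pdt {0..<tb} gam) s v
        + (- (1 / spd s v)\<^sup>2 * pdt {0..<tb} spd s v) *\<^sub>R pdu gam s v)"
    by (rule has_partial_cong) (simp_all add: tangent_eq)
  then have "pdt {0..<tb} T t u = (1 / spd t u) *\<^sub>R pdu (pdt {0..<tb} gam) t u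
      + (- (1 / spd t u)\<^sup>2 * pdt {0..<tb} spd t u) *\<^sub>R pdu gam t u"
    by (rule has_partial_Time_pdt(2)[OF _ t])
  moreover have "pdu gam t u \<bullet> B t u = 0"
    using binormal_frame(1)[OF t, of u] speed_nonzero[OF t, of u] by (simp add: tangent_eq)
  ultimately show ?thesis by (simp add: inner_add_left inner_diff_left)
qed

lemma velocity_eq:
  assumes t: "t \<in> {0..<tb}"
  shows "pdt {0..<tb} gam t u = kap t u *\<^sub>R (cos (th t u) *\<^sub>R N t u + sin (th t u) *\<^sub>R B t u)"
  using vector_derivative_within[OF at_within_atLeastLessThan_nontrivial[OF t] flow_gam[OF t]]
  by (simp add: pdt_def nu_fr_def)

lemma angle_has_pdu: "t \<in> {0..<tb} \<Longrightarrow> (th t has_real_derivative pdu th t u) (at u)"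
  using has_partial_SpaceD[OF th_smooth refl]
  by (simp add: has_real_derivative_iff_has_vector_derivative)

lemma velocity_pdu_binormal:
  assumes t: "t \<in> {0..<tb}"
  shows "pdu (pdt {0..<tb} gam) t u \<bullet> B t u
    = pdu kap t u * sin (th t u) + kap t u * cos (th t u) * (pdu N t u \<bullet> B t u + pdu th t u)"
proof -
  have "((\<lambda>v. kap t v *\<^sub>R (cos (th t v) *\<^sub>R N t v + sin (th t v) *\<^sub>R B t v)) has_vector_derivative
      kap t u *\<^sub>R ((cos (th t u) *\<^sub>R pdu N t u + (- sin (th t u) * pdu th t u) *\<^sub>R N t u)
        + (sin (th t u) *\<^sub>R pdu B t u + (cos (th t u) * pdu th t u) *\<^sub>R B t u))
      + pdu kap t u *\<^sub>R (cos (th t u) *\<^sub>R N t u + sin (th t u) *\<^sub>R B t u)) (at u)"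
    by (intro has_vector_derivative_scaleR has_vector_derivative_add
        DERIV_chain2[OF DERIV_cos angle_has_pdu[OF t]]
        DERIV_chain2[OF DERIV_sin angle_has_pdu[OF t]]
        jet_scalar_has_pdu[OF jet_curv t] jet_vector_has_pdu[OF jet_normal t]
        jet_vector_has_pdu[OF jet_binormal t])
  moreover have "pdu (pdt {0..<tb} gam) t u =
      vector_derivative (\<lambda>v. kap t v *\<^sub>R (cos (th t v) *\<^sub>R N t v + sin (th t v) *\<^sub>R B t v)) (at u)"
    using velocity_eq[OF t] by (simp add: pdu_def)
  ultimately have "pdu (pdt {0..<tb} gam) t u =
      kap t u *\<^sub>R ((cos (th t u) *\<^sub>R pdu N t u + (- sin (th t u) * pdu th t u) *\<^sub>R N t u)
        + (sin (th t u) *\<^sub>R pdu B t u + (cos (th t u) * pdu th t u) *\<^sub>R B t u))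
      + pdu kap t u *\<^sub>R (cos (th t u) *\<^sub>R N t u + sin (th t u) *\<^sub>R B t u)"
    by (simp add: vector_derivative_at)
  then show ?thesis
    using binormal_frame(2,3)[OF t, of u] frame_pdu_relations(3)[OF t, of u]
    by (simp add: inner_add_left inner_diff_left distrib_left)
qed

lemma deriv_curv: "t \<in> {0..<tb} \<Longrightarrow> deriv (kap t) u = pdu kap t u"
  by (rule DERIV_imp_deriv[OF jet_scalar_has_pdu[OF jet_curv]])

lemma deriv_angle: "t \<in> {0..<tb} \<Longrightarrow> deriv (th t) u = pdu th t u"
  by (rule DERIV_imp_deriv[OF angle_has_pdu])

lemma torsion_variation_integrand:
  assumes t: "t \<in> {0..<tb}"
  shows "pdu N t u \<bullet> pdt {0..<tb} B t u - pdt {0..<tb} N t u \<bullet> pdu B t u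
    = torsion_flux t u * spd t u"
proof -
  note pdu_rel = frame_pdu_relations[OF t, of u] and pdt_rel = frame_pdt_relations[OF t, of u]
  have NuBt: "pdu N t u \<bullet> pdt {0..<tb} B t u = kap t u * (pdu (pdt {0..<tb} gam) t u \<bullet> B t u)"
    using frame_coordinates[OF t, of "pdu N t u" "pdt {0..<tb} B t u" u] pdu_rel pdt_rel
      tangent_pdt_binormal[OF t, of u] speed_nonzero[OF t, of u] by simp
  have NtBu: "pdt {0..<tb} N t u \<bullet> pdu B t u = 0"
    using frame_coordinates[OF t, of "pdt {0..<tb} N t u" "pdu B t u" u] pdu_rel pdt_rel by simp
  have tors: "tors (gam t) u = (pdu N t u \<bullet> B t u) / spd t u"
    using tors_mult_speed[OF t, of u] speed_nonzero[OF t, of u] by (simp add: field_simps)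
  have arith: "\<And>k c si h a p s :: real. s \<noteq> 0 \<Longrightarrow>
      (k * c * (h / s + a / s) * k + k * si * (p / s)) * s = k * (p * si + k * c * (h + a))"
    by (simp add: field_simps)
  have "torsion_flux t u * spd t u
      = kap t u * (pdu kap t u * sin (th t u)
          + kap t u * cos (th t u) * (pdu N t u \<bullet> B t u + pdu th t u))"
    unfolding psi1_def psi2_def psi3_def sdr_def tors deriv_curv[OF t] deriv_angle[OF t]
    by (rule arith[OF speed_nonzero[OF t]])
  then show ?thesis by (simp add: NuBt NtBu velocity_pdu_binormal[OF t])
qed

lemma normal_pdt_periodic:
  assumes t: "t \<in> {0..<tb}"
  shows "pdt {0..<tb} N t (u + 2*pi) = pdt {0..<tb} N t u"
proof -
  have "((\<lambda>s. N s (u + 2*pi)) has_vector_derivative pdt {0..<tb} N t u) (at t within {0..<tb})"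
    using jet_vector_has_pdt[OF jet_normal t, of u]
    by (rule has_vector_derivative_transform[OF t, rotated])
      (simp add: jet_vector_periodic[OF jet_normal])
  then show ?thesis
    by (rule vector_derivative_unique_within[OF at_within_atLeastLessThan_nontrivial[OF t]
          jet_vector_has_pdt[OF jet_normal t]])
qed

lemma normal_pdt_by_parts:
  assumes t: "t \<in> {0..<tb}"
  shows "((\<lambda>u. pdt {0..<tb} (pdu N) t u \<bullet> B t u) has_integral
           - integral {0..2*pi} (\<lambda>u. pdt {0..<tb} N t u \<bullet> pdu B t u)) {0..2*pi}"
proof -
  have Nu: "jet_vector tb gam (pdu N)" and NuS: "has_partial Space tb N (pdu N)"
    using jet_vector_Space[OF jet_normal] by auto
  have NtS: "has_partial Space tb (pdt {0..<tb} N) (pdt {0..<tb} (pdu N))"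
    by (rule has_partial_Space_of_Time[OF NuS jet_vector_Time[OF jet_normal]
          jet_vector_Time[OF Nu]])
  have Nt: "continuous_on {0..2*pi} (pdt {0..<tb} N t)"
    by (rule jet_vector_pdt_continuous_on[OF jet_normal t])
  have Bu: "continuous_on {0..2*pi} (pdu B t)"
    using jet_vector_continuous_on[OF conjunct1[OF jet_vector_Space[OF jet_binormal]] t] .
  have "((\<lambda>u. pdt {0..<tb} N t u \<bullet> pdu B t u) has_integral
      integral {0..2*pi} (\<lambda>u. pdt {0..<tb} N t u \<bullet> pdu B t u)) {0..2*pi}"
    by (intro integrable_integral integrable_continuous_interval continuous_on_inner[OF Nt Bu])
  moreover have "pdt {0..<tb} N t (2*pi) \<bullet> B t (2*pi) = pdt {0..<tb} N t 0 \<bullet> B t 0"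
    using normal_pdt_periodic[OF t, of 0] jet_vector_periodic[OF jet_binormal t, of 0] by simp
  ultimately have "((\<lambda>u. pdt {0..<tb} N t u \<bullet> pdu B t u) has_integral
      pdt {0..<tb} N t (2*pi) \<bullet> B t (2*pi) - pdt {0..<tb} N t 0 \<bullet> B t 0
        - - integral {0..2*pi} (\<lambda>u. pdt {0..<tb} N t u \<bullet> pdu B t u)) {0..2*pi}"
    by simp
  then show ?thesis
    by (rule integration_by_parts[OF bounded_bilinear_inner _ Nt
          jet_vector_continuous_on[OF jet_binormal t] has_partial_SpaceD[OF NtS refl t]
          jet_vector_has_pdu[OF jet_binormal t], rotated]) simp
qed


lemma torsion_density_integral_has_derivative:
  assumes t: "t \<in> {0..<tb}"
  shows "((\<lambda>s. integral {0..2*pi} (\<lambda>u. pdu N s u \<bullet> B s u)) has_vector_derivative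
           integral {0..2*pi} (\<lambda>u. torsion_flux t u * spd t u)) (at t within {0..<tb})"
proof -
  have Nu: "jet_vector tb gam (pdu N)"
    using jet_vector_Space[OF jet_normal] by auto
  have "has_partial Time tb (\<lambda>s u. pdu N s u \<bullet> B s u)
      (\<lambda>s u. pdu N s u \<bullet> pdt {0..<tb} B s u + pdt {0..<tb} (pdu N) s u \<bullet> B s u)"
    by (rule has_partial_bilinear[OF bounded_bilinear_inner jet_vector_Time[OF Nu]
          jet_vector_Time[OF jet_binormal]])
  note D = integral_Space_has_Time_derivative[OF this t, of 0 "2*pi"]
  have NuBt: "((\<lambda>u. pdu N t u \<bullet> pdt {0..<tb} B t u) has_integral
      integral {0..2*pi} (\<lambda>u. pdu N t u \<bullet> pdt {0..<tb} B t u)) {0..2*pi}"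
    by (intro integrable_integral integrable_continuous_interval continuous_on_inner
        jet_vector_continuous_on[OF Nu t] jet_vector_pdt_continuous_on[OF jet_binormal t])
  have NtBu: "((\<lambda>u. pdt {0..<tb} N t u \<bullet> pdu B t u) has_integral
      integral {0..2*pi} (\<lambda>u. pdt {0..<tb} N t u \<bullet> pdu B t u)) {0..2*pi}"
    by (intro integrable_integral integrable_continuous_interval continuous_on_inner
        jet_vector_pdt_continuous_on[OF jet_normal t]
        jet_vector_continuous_on[OF conjunct1[OF jet_vector_Space[OF jet_binormal]] t])
  have "integral {0..2*pi} (\<lambda>u. pdu N t u \<bullet> pdt {0..<tb} B t u + pdt {0..<tb} (pdu N) t u \<bullet> B t u)
      = integral {0..2*pi} (\<lambda>u. pdu N t u \<bullet> pdt {0..<tb} B t u)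
        - integral {0..2*pi} (\<lambda>u. pdt {0..<tb} N t u \<bullet> pdu B t u)"
    using integral_unique[OF has_integral_add[OF NuBt normal_pdt_by_parts[OF t]]] by simp
  also have "\<dots> = integral {0..2*pi}
      (\<lambda>u. pdu N t u \<bullet> pdt {0..<tb} B t u - pdt {0..<tb} N t u \<bullet> pdu B t u)"
    using integral_unique[OF has_integral_diff[OF NuBt NtBu]] by simp
  also have "\<dots> = integral {0..2*pi} (\<lambda>u. torsion_flux t u * spd t u)"
    by (simp add: torsion_variation_integrand[OF t])
  finally show ?thesis using D by simp
qed

lemma total_torsion_has_derivative:
  assumes t: "t \<in> {0..<tb}"
  shows "((\<lambda>s. curve_int (gam s) (tors (gam s))) has_real_derivative
           curve_int (gam t) (torsion_flux t)) (at t within {0..<tb})"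
proof -
  have "((\<lambda>s. curve_int (gam s) (tors (gam s))) has_vector_derivative
      integral {0..2*pi} (\<lambda>u. torsion_flux t u * spd t u)) (at t within {0..<tb})"
    using torsion_density_integral_has_derivative[OF t]
    by (rule has_vector_derivative_transform[OF t, rotated])
      (simp add: curve_int_def tors_mult_speed)
  then show ?thesis by (simp add: curve_int_def has_real_derivative_iff_has_vector_derivative)
qed

lemma total_psi3_eq:
  assumes s: "s \<in> {0..<tb}"
  shows "curve_int (gam s) (psi3 (gam s) (th s))
    = curve_int (gam s) (tors (gam s)) + (th s (2*pi) - th s 0)"
proof -
  have "continuous_on {0..2*pi} (\<lambda>u. pdu N s u \<bullet> B s u)"
    by (intro continuous_on_inner jet_vector_continuous_on[OF jet_binormal s]
        jet_vector_continuous_on[OF conjunct1[OF jet_vector_Space[OF jet_normal]] s])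
  then have "(\<lambda>u. tors (gam s) u * spd s u) integrable_on {0..2*pi}"
    by (simp add: tors_mult_speed[OF s] integrable_continuous_interval)
  then have tors: "((\<lambda>u. tors (gam s) u * spd s u) has_integral
      curve_int (gam s) (tors (gam s))) {0..2*pi}"
    unfolding curve_int_def by (rule integrable_integral)
  have angle: "(pdu th s has_integral th s (2*pi) - th s 0) {0..2*pi}"
    by (rule fundamental_theorem_of_calculus)
      (auto intro: has_vector_derivative_at_within has_partial_SpaceD[OF th_smooth refl s])
  have "(\<lambda>u. psi3 (gam s) (th s) u * spd s u) = (\<lambda>u. tors (gam s) u * spd s u + pdu th s u)"
    using speed_nonzero[OF s] by (simp add: psi3_def sdr_def deriv_angle[OF s] distrib_right)
  then show ?thesis
    using integral_unique[OF has_integral_add[OF tors angle]] by (simp add: curve_int_def)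
qed

lemma total_angle_change_constant: "\<exists>c. \<forall>s\<in>{0..<tb}. th s (2*pi) - th s 0 = c"
proof -
  let ?w = "\<lambda>s. (th s (2*pi) - th s 0) / (2*pi)"
  have "continuous_on {0..<tb} (\<lambda>s. th s v)" for v
    by (rule continuous_on_slice_fst[OF has_partial_continuous[OF th_smooth]]) auto
  then have "continuous_on {0..<tb} ?w"
    by (auto intro!: continuous_intros)
  moreover have "?w s \<in> \<int>" if "s \<in> {0..<tb}" for s
    using th_closed[OF that] by auto
  ultimately have "?w constant_on {0..<tb}"
    by (intro integer_valued_continuous_on_constant convex_connected) auto
  then obtain y where "\<forall>s\<in>{0..<tb}. ?w s = y" by (auto simp: constant_on_def)
  then show ?thesis by (intro exI[of _ "2*pi*y"]) (auto simp: field_simps)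
qed

lemma total_psi3_has_derivative:
  assumes t: "t \<in> {0..<tb}"
  shows "((\<lambda>s. curve_int (gam s) (psi3 (gam s) (th s))) has_real_derivative
           curve_int (gam t) (torsion_flux t)) (at t within {0..<tb})"
proof -
  obtain c where c: "\<And>s. s \<in> {0..<tb} \<Longrightarrow> th s (2*pi) - th s 0 = c"
    using total_angle_change_constant by blast
  have "((\<lambda>s. curve_int (gam s) (tors (gam s)) + c) has_real_derivative
      curve_int (gam t) (torsion_flux t)) (at t within {0..<tb})"
    using DERIV_add[OF total_torsion_has_derivative[OF t] DERIV_const[of c]] by simp
  then show ?thesis
    unfolding has_real_derivative_iff_has_vector_derivative
    by (rule has_vector_derivative_transform[OF t, rotated]) (simp add: total_psi3_eq c)
qed

end

theorem mainTheorem9: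
  fixes gam :: "real \<Rightarrow> real \<Rightarrow> real^3"
    and th ups :: "real \<Rightarrow> real \<Rightarrow> real"
    and tb :: real
  assumes tb_pos: "0 < tb"
    and gam_smooth: "smooth_flow {0..<tb} gam"
    and gam_closed: "\<And>t u. t \<in> {0..<tb} \<Longrightarrow> gam t (u + 2*pi) = gam t u"
    and gam_regular: "\<And>t u. t \<in> {0..<tb} \<Longrightarrow> vector_derivative (gam t) (at u) \<noteq> 0"
    and th_reg: "Cmn 1 2 {0..<tb} th"
    and th_closed: "\<And>t u. t \<in> {0..<tb} \<Longrightarrow> \<exists>k::int. th t (u + 2*pi) = th t u + 2*pi*k"
    and ups_reg: "Cmn 1 1 {0..<tb} ups"
    and ups_closed: "\<And>t u. t \<in> {0..<tb} \<Longrightarrow> ups t (u + 2*pi) = ups t u"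
    and kappa_pos: "\<And>t u. t \<in> {0..<tb} \<Longrightarrow> curv (gam t) u > 0"
    and flow_gam: "\<And>t u. t \<in> {0..<tb} \<Longrightarrow>
        ((\<lambda>s. gam s u) has_vector_derivative (curv (gam t) u *\<^sub>R nu_fr (gam t) (th t) u))
          (at t within {0..<tb})"
    and flow_th: "\<And>t u. t \<in> {0..<tb} \<Longrightarrow>
        ((\<lambda>s. th s u) has_real_derivative ups t u) (at t within {0..<tb})"
  shows "\<forall>t\<in>{0..<tb}.
      let R = curve_int (gam t) (\<lambda>u. psi1 (gam t) (th t) u * psi3 (gam t) (th t) u * curv (gam t) u
                                   + psi2 (gam t) (th t) u * sdr (gam t) (curv (gam t)) u)
      in ((\<lambda>s. curve_int (gam s) (tors (gam s))) has_real_derivative R) (at t within {0..<tb}) \<and>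
         ((\<lambda>s. curve_int (gam s) (psi3 (gam s) (th s))) has_real_derivative R) (at t within {0..<tb})"
proof -
  interpret framed_curvature_flow gam th tb
  proof
    show "has_partial Space tb th (pdu th)"
      using Cmn_has_partial_Space[OF th_reg, of 0 0] by simp
    show "\<exists>k::int. th t (2*pi) = th t 0 + 2*pi*k" if "t \<in> {0..<tb}" for t
      using th_closed[OF that, of 0] by simp
  qed (fact gam_smooth gam_closed gam_regular kappa_pos flow_gam)+
  show ?thesis
    using total_torsion_has_derivative total_psi3_has_derivative by (simp add: Let_def)
qed

end
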